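(* Let $n=p^{\alpha}q^{\beta}$ where $p,q$ are distinct primes and $\alpha,\beta\geq 1$ are integers. Then $\mathbb{AG}(\mathbb{Z}_n)$ has no induced cycle of odd length greater than $3$.
   Context: For a commutative ring $R$ with unity, the annihilating-ideal graph $\mathbb{AG}(R)$ is the simple graph whose vertex set is the set of all non-zero ideals of $R$ with non-zero annihilator, two distinct vertices $I,J$ being adjacent if and only if $IJ=0$. An induced cycle is an induced subgraph isomorphic to a cycle. *)

theory Defs
  imports "HOL-Number_Theory.Residues" "HOL-Algebra.Ideal_Product"
begin

definition ann :: "('a, 'b) ring_scheme \<Rightarrow> 'a set \<Rightarrow> 'a set" where
  "ann R I = {x \<in> carrier R. \<forall>i\<in>I. x \<otimes>\<^bsub>R\<^esub> i = \<zero>\<^bsub>R\<^esub>}"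

definition AG_vertices :: "('a, 'b) ring_scheme \<Rightarrow> 'a set set" where
  "AG_vertices R = {I. ideal I R \<and> I \<noteq> {\<zero>\<^bsub>R\<^esub>} \<and> ann R I \<noteq> {\<zero>\<^bsub>R\<^esub>}}"

definition AG_adj :: "('a, 'b) ring_scheme \<Rightarrow> 'a set \<Rightarrow> 'a set \<Rightarrow> bool" where
  "AG_adj R I J \<longleftrightarrow> I \<in> AG_vertices R \<and> J \<in> AG_vertices R \<and> I \<noteq> J
                     \<and> ideal_prod R I J = {\<zero>\<^bsub>R\<^esub>}"

definition induced_cycle :: "'v set \<Rightarrow> ('v \<Rightarrow> 'v \<Rightarrow> bool) \<Rightarrow> nat \<Rightarrow> (nat \<Rightarrow> 'v) \<Rightarrow> bool" where
  "induced_cycle V E k v \<longleftrightarrow> 3 \<le> k \<and> (\<forall>i<k. v i \<in> V) \<and> inj_on v {..<k} \<and>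
     (\<forall>i<k. \<forall>j<k. i \<noteq> j \<longrightarrow> (E (v i) (v j) \<longleftrightarrow> (j = Suc i mod k \<or> i = Suc j mod k)))"

end

theory Submission
  imports Defs
begin

text \<open>
  Record a set \<open>X\<close> of integers by the exponents \<open>A X \<le> \<alpha>\<close> and \<open>B X \<le> \<beta>\<close> of the largest powers of
  \<open>p\<close> and \<open>q\<close> dividing all its elements. Then \<open>n\<close> divides all products \<open>x y\<close> with \<open>x \<in> X\<close>,
  \<open>y \<in> Y\<close> iff \<open>\<alpha> \<le> A X + A Y\<close> and \<open>\<beta> \<le> B X + B Y\<close>, so \<open>\<A>\<G>(\<int>\<^sub>n)\<close> is a graph with this
  two-threshold adjacency. In such a graph the middle vertex of an induced path \<open>x - y - z\<close> lies
  strictly above both ends in one of the two coordinates. Along an induced cycle, two consecutive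
  vertices cannot be peaks in the same coordinate (each would lie strictly above the other), so
  the coordinate alternates, which is impossible on an odd cycle.
\<close>

lemma alternating_iff_even:
  assumes "\<And>m. P (Suc m) \<longleftrightarrow> \<not> P m"
  shows "P k \<longleftrightarrow> (P 0 \<longleftrightarrow> even k)"
  by (induction k) (simp_all add: assms)

lemma mod_add_neq:
  fixes i d k :: nat
  assumes "0 < d" "d < k"
  shows "(i + d) mod k \<noteq> i mod k"
  using assms by (simp add: mod_eq_dvd_iff_nat nat_dvd_not_less)

lemma induced_cycle_cong:
  assumes "\<And>u w. u \<in> V \<Longrightarrow> w \<in> V \<Longrightarrow> u \<noteq> w \<Longrightarrow> E u w \<longleftrightarrow> E' u w"
  shows "induced_cycle V E k v \<longleftrightarrow> induced_cycle V E' k v"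
proof -
  have "E (v i) (v j) \<longleftrightarrow> E' (v i) (v j)"
    if "\<forall>i<k. v i \<in> V" "inj_on v {..<k}" "i < k" "j < k" "i \<noteq> j" for i j
    using assms that by (metis inj_on_contraD lessThan_iff)
  then show ?thesis unfolding induced_cycle_def by blast
qed

lemma induced_cycle_adjacent:
  assumes "induced_cycle V E k v"
  shows "E (v (i mod k)) (v (Suc i mod k))"
proof -
  have "3 \<le> k" using assms unfolding induced_cycle_def by simp
  then have "Suc i mod k \<noteq> i mod k" using mod_add_neq[of 1 k i] by simp
  then show ?thesis
    using assms \<open>3 \<le> k\<close> unfolding induced_cycle_def by (simp add: mod_Suc_eq)
qed

lemma induced_cycle_not_adjacent:
  assumes "induced_cycle V E k v" "4 \<le> k"
  shows "\<not> E (v (i mod k)) (v (Suc (Suc i) mod k))"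
proof -
  have "Suc (Suc i) mod k \<noteq> i mod k" "Suc (Suc (Suc i)) mod k \<noteq> i mod k"
    and "Suc (Suc i) mod k \<noteq> Suc i mod k"
    using assms(2) mod_add_neq[of 2 k i] mod_add_neq[of 3 k i] mod_add_neq[of 1 k "Suc i"]
    by (simp_all add: eval_nat_numeral)
  then show ?thesis
    using assms unfolding induced_cycle_def by (simp add: mod_Suc_eq)
qed

definition threshold_adj :: "('v \<Rightarrow> 'a::{plus,ord}) \<Rightarrow> ('v \<Rightarrow> 'a) \<Rightarrow> 'a \<Rightarrow> 'a \<Rightarrow> 'v \<Rightarrow> 'v \<Rightarrow> bool"
  where "threshold_adj A B a b u w \<longleftrightarrow> a \<le> A u + A w \<and> b \<le> B u + B w"

lemma threshold_adj_induced_path_middle: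
  fixes A B :: "'v \<Rightarrow> 'a::linordered_cancel_ab_semigroup_add"
  assumes "threshold_adj A B a b x y" "threshold_adj A B a b y z" "\<not> threshold_adj A B a b x z"
  shows "A x < A y \<and> A z < A y \<or> B x < B y \<and> B z < B y"
proof -
  have "A x + A z < a \<or> B x + B z < b"
    using assms(3) unfolding threshold_adj_def by auto
  then show ?thesis
    using assms(1,2) unfolding threshold_adj_def
    by (metis add.commute add_less_imp_less_left order_less_le_trans)
qed

lemma threshold_graph_no_odd_induced_cycle:
  fixes A B :: "'v \<Rightarrow> 'a::linordered_cancel_ab_semigroup_add"
  assumes cycle: "induced_cycle V (threshold_adj A B a b) k v" and "odd k" "3 < k"
  shows False
proof -
  have "4 \<le> k" using \<open>3 < k\<close> by simp
  define c where "c i = v (i mod k)" for i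
  define A_peak where
    "A_peak m \<longleftrightarrow> A (c m) < A (c (Suc m)) \<and> A (c (Suc (Suc m))) < A (c (Suc m))" for m
  have peak: "A_peak m \<or> B (c m) < B (c (Suc m)) \<and> B (c (Suc (Suc m))) < B (c (Suc m))" for m
    unfolding A_peak_def c_def
    by (rule threshold_adj_induced_path_middle[OF induced_cycle_adjacent[OF cycle]
          induced_cycle_adjacent[OF cycle] induced_cycle_not_adjacent[OF cycle \<open>4 \<le> k\<close>]])
  have "A_peak (Suc m) \<longleftrightarrow> \<not> A_peak m" for m
    using peak[of m] peak[of "Suc m"] unfolding A_peak_def by auto
  then have "A_peak k \<longleftrightarrow> (A_peak 0 \<longleftrightarrow> even k)"
    by (rule alternating_iff_even)
  moreover have "A_peak k \<longleftrightarrow> A_peak 0"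
  proof -
    have "c (m + k) = c m" for m by (simp add: c_def)
    from this[of 0] this[of 1] this[of 2] show ?thesis
      unfolding A_peak_def by (simp add: eval_nat_numeral)
  qed
  ultimately show False
    using \<open>odd k\<close> by simp
qed

text \<open>\<open>capped_valuation p a X = min a (min {v\<^sub>p x | x \<in> X})\<close> with the convention
  \<open>v\<^sub>p 0 = \<infinity>\<close>; the cap keeps it finite when \<open>X \<subseteq> {0}\<close>.\<close>

definition capped_valuation :: "'a::comm_semiring_1 \<Rightarrow> nat \<Rightarrow> 'a set \<Rightarrow> nat" where
  "capped_valuation p a X = (GREATEST e. e \<le> a \<and> (\<forall>x\<in>X. p ^ e dvd x))"

lemma capped_valuation_le_and_dvd:
  "capped_valuation p a X \<le> a \<and> (\<forall>x\<in>X. p ^ capped_valuation p a X dvd x)"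
  unfolding capped_valuation_def by (rule GreatestI_nat[of _ 0 a]) auto

lemma capped_valuation_maximal:
  assumes "e \<le> a" "\<forall>x\<in>X. p ^ e dvd x"
  shows "e \<le> capped_valuation p a X"
  unfolding capped_valuation_def by (rule Greatest_le_nat[of _ e a]) (use assms in auto)

lemma capped_valuation_witness:
  assumes "capped_valuation p a X < a"
  shows "\<exists>x\<in>X. \<not> p ^ Suc (capped_valuation p a X) dvd x"
  using capped_valuation_maximal[of "Suc (capped_valuation p a X)" a X p] assms by auto

lemma prime_power_dvd_products_iff:
  fixes p :: "'a::factorial_semiring"
  assumes "prime p"
  shows "(\<forall>x\<in>X. \<forall>y\<in>Y. p ^ a dvd x * y) \<longleftrightarrow>
    a \<le> capped_valuation p a X + capped_valuation p a Y"
    (is "?products \<longleftrightarrow> a \<le> ?e + ?f")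
proof
  assume ?products
  show "a \<le> ?e + ?f"
  proof (rule ccontr)
    assume "\<not> a \<le> ?e + ?f"
    then obtain x y where "x \<in> X" "\<not> p ^ Suc ?e dvd x" "y \<in> Y" "\<not> p ^ Suc ?f dvd y"
      using capped_valuation_witness[of p a X] capped_valuation_witness[of p a Y] by auto
    moreover have "p ^ Suc (?e + ?f) dvd x * y"
      using \<open>?products\<close> \<open>x \<in> X\<close> \<open>y \<in> Y\<close> \<open>\<not> a \<le> ?e + ?f\<close>
      by (meson dvd_trans le_imp_power_dvd not_less_eq_eq)
    ultimately show False
      using prime_elem_power_dvd_cases[of p "Suc (?e + ?f)" x y "Suc ?e" "Suc ?f"] assms
      by (simp add: prime_imp_prime_elem)
  qed
next
  assume "a \<le> ?e + ?f"
  show ?products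
  proof (intro ballI)
    fix x y assume "x \<in> X" "y \<in> Y"
    then have "p ^ (?e + ?f) dvd x * y"
      using capped_valuation_le_and_dvd[of p a] by (simp add: power_add mult_dvd_mono)
    then show "p ^ a dvd x * y"
      using \<open>a \<le> ?e + ?f\<close> le_imp_power_dvd dvd_trans by blast
  qed
qed

lemma two_prime_powers_dvd_products_iff:
  fixes p q :: "'a::factorial_semiring_gcd"
  assumes "prime p" "prime q" "p \<noteq> q"
  shows "(\<forall>x\<in>X. \<forall>y\<in>Y. p ^ a * q ^ b dvd x * y) \<longleftrightarrow>
    threshold_adj (capped_valuation p a) (capped_valuation q b) a b X Y"
proof -
  have "coprime (p ^ a) (q ^ b)"
    using primes_coprime[OF assms] by simp
  then have "p ^ a * q ^ b dvd z \<longleftrightarrow> p ^ a dvd z \<and> q ^ b dvd z" for z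
    by (meson divides_mult dvd_mult_left dvd_mult_right)
  then show ?thesis
    unfolding threshold_adj_def
    by (simp add: ball_conj_distrib prime_power_dvd_products_iff assms(1,2))
qed

lemma (in ring) ideal_prod_eq_zero_iff:
  assumes "ideal I R" "ideal J R"
  shows "ideal_prod R I J = {\<zero>} \<longleftrightarrow> (\<forall>i\<in>I. \<forall>j\<in>J. i \<otimes> j = \<zero>)"
proof
  assume "ideal_prod R I J = {\<zero>}"
  show "\<forall>i\<in>I. \<forall>j\<in>J. i \<otimes> j = \<zero>"
  proof (intro ballI)
    fix i j assume "i \<in> I" "j \<in> J"
    then have "i \<otimes> j \<in> ideal_prod R I J"
      by (rule ideal_prod.prod)
    with \<open>ideal_prod R I J = {\<zero>}\<close> show "i \<otimes> j = \<zero>"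
      by simp
  qed
next
  assume products: "\<forall>i\<in>I. \<forall>j\<in>J. i \<otimes> j = \<zero>"
  have "s = \<zero>" if "s \<in> ideal_prod R I J" for s
    using that
  proof induction
    case (prod i j)
    then show ?case using products by blast
  next
    case (sum s1 s2)
    then show ?case by simp
  qed
  moreover have "\<zero> \<in> I" "\<zero> \<in> J"
    using assms by (simp_all add: additive_subgroup.zero_closed ideal.axioms(1))
  then have "\<zero> \<otimes> \<zero> \<in> ideal_prod R I J"
    by (rule ideal_prod.prod)
  with products \<open>\<zero> \<in> I\<close> \<open>\<zero> \<in> J\<close> have "\<zero> \<in> ideal_prod R I J"
    by simp
  ultimately show "ideal_prod R I J = {\<zero>}"
    by blast
qed

lemma residue_ring_ideal_prod_eq_zero_iff:
  fixes m :: int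
  assumes "1 < m" "ideal I (residue_ring m)" "ideal J (residue_ring m)"
  shows "ideal_prod (residue_ring m) I J = {0} \<longleftrightarrow> (\<forall>x\<in>I. \<forall>y\<in>J. m dvd x * y)"
proof -
  interpret ring "residue_ring m"
    using residues.cring[of m] assms(1) by (simp add: residues_def cring.axioms(1))
  show ?thesis
    using ideal_prod_eq_zero_iff[OF assms(2,3)] by (simp add: residue_ring_def dvd_eq_mod_eq_0)
qed

lemma AG_adj_residue_ring_iff_threshold_adj:
  fixes p q m :: int
  assumes "prime p" "prime q" "p \<noteq> q" "m = p ^ a * q ^ b" "1 < m"
    and "I \<in> AG_vertices (residue_ring m)" "J \<in> AG_vertices (residue_ring m)" "I \<noteq> J"
  shows "AG_adj (residue_ring m) I J \<longleftrightarrow>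
    threshold_adj (capped_valuation p a) (capped_valuation q b) a b I J"
proof -
  have "AG_adj (residue_ring m) I J \<longleftrightarrow> ideal_prod (residue_ring m) I J = {0}"
    using assms(6-8) unfolding AG_adj_def by (simp add: residue_ring_def)
  also have "\<dots> \<longleftrightarrow> (\<forall>x\<in>I. \<forall>y\<in>J. p ^ a * q ^ b dvd x * y)"
    using assms(4-7) residue_ring_ideal_prod_eq_zero_iff[of m I J]
    unfolding AG_vertices_def by simp
  also have "\<dots> \<longleftrightarrow> threshold_adj (capped_valuation p a) (capped_valuation q b) a b I J"
    using assms(1-3) by (rule two_prime_powers_dvd_products_iff)
  finally show ?thesis .
qed

theorem lemma6:
  fixes p q \<alpha> \<beta> n :: nat
  assumes "prime p" and "prime q" and "p \<noteq> q"
    and "\<alpha> \<ge> 1" and "\<beta> \<ge> 1"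
    and "n = p ^ \<alpha> * q ^ \<beta>"
  shows "\<not> (\<exists>k v. odd k \<and> k > 3 \<and>
            induced_cycle (AG_vertices (residue_ring (int n))) (AG_adj (residue_ring (int n))) k v)"
proof
  define R where "R = residue_ring (int n)"
  assume "\<exists>k v. odd k \<and> k > 3 \<and> induced_cycle (AG_vertices R) (AG_adj R) k v"
  then obtain k v where "odd k" "3 < k" and cycle: "induced_cycle (AG_vertices R) (AG_adj R) k v"
    by blast
  have "1 < p ^ \<alpha>" "1 < q ^ \<beta>"
    using one_less_power[OF prime_gt_1_nat[OF assms(1)]] one_less_power[OF prime_gt_1_nat[OF assms(2)]]
      assms(4,5) by simp_all
  then have "1 < n"
    unfolding assms(6) by (rule less_1_mult)
  then have "1 < int n"
    by simp
  let ?E = "threshold_adj (capped_valuation (int p) \<alpha>) (capped_valuation (int q) \<beta>) \<alpha> \<beta>"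
  have "AG_adj R I J \<longleftrightarrow> ?E I J" if "I \<in> AG_vertices R" "J \<in> AG_vertices R" "I \<noteq> J" for I J
    using AG_adj_residue_ring_iff_threshold_adj[of "int p" "int q" "int n" \<alpha> \<beta>] assms(1-3,6)
      \<open>1 < int n\<close> that unfolding R_def by simp
  with cycle have "induced_cycle (AG_vertices R) ?E k v"
    using induced_cycle_cong[of "AG_vertices R" "AG_adj R" ?E] by blast
  then show False
    using \<open>odd k\<close> \<open>3 < k\<close> by (rule threshold_graph_no_odd_induced_cycle)
qed

end
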